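(* For any connected graphs $G$ and $H$, $dim_s(G\square H)\ge dim_s(G)\,dim_s(H)$.
   Context: Graphs are finite, simple, undirected; for connected $G$, $d_G$ is the shortest-path distance and $I_G[u,v]$ is the set of vertices lying on some shortest $u$–$v$ path. A vertex $w$ strongly resolves vertices $u,v$ if $v\in I_G[u,w]$ or $u\in I_G[v,w]$. A strong resolving set of $G$ is a set $S\subseteq V(G)$ such that every pair of vertices is strongly resolved by some vertex of $S$; $dim_s(G)$ is the minimum cardinality of such a set. $G\square H$ denotes the Cartesian product: vertex set $V(G)\times V(H)$, $(a,b)\sim(c,d)$ iff ($a=c$ and $bd\in E(H)$) or ($b=d$ and $ac\in E(G)$). *)

theory Defs
  imports Main
begin

definition simple_graph :: "'a set \<Rightarrow> ('a \<Rightarrow> 'a \<Rightarrow> bool) \<Rightarrow> bool" where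
  "simple_graph V E \<longleftrightarrow> finite V \<and> (\<forall>x y. E x y \<longrightarrow> x \<in> V \<and> y \<in> V)
     \<and> (\<forall>x y. E x y \<longrightarrow> E y x) \<and> (\<forall>x. \<not> E x x)"

text \<open>A walk from u to v: a nonempty vertex list with consecutive vertices adjacent;
  its length is the number of edges, i.e. length xs - 1.\<close>
definition walk :: "'a set \<Rightarrow> ('a \<Rightarrow> 'a \<Rightarrow> bool) \<Rightarrow> 'a \<Rightarrow> 'a \<Rightarrow> 'a list \<Rightarrow> bool" where
  "walk V E u v xs \<longleftrightarrow> xs \<noteq> [] \<and> set xs \<subseteq> V \<and> hd xs = u \<and> last xs = v
     \<and> (\<forall>i. Suc i < length xs \<longrightarrow> E (xs ! i) (xs ! Suc i))"

definition connected_graph :: "'a set \<Rightarrow> ('a \<Rightarrow> 'a \<Rightarrow> bool) \<Rightarrow> bool" where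
  "connected_graph V E \<longleftrightarrow> V \<noteq> {} \<and> (\<forall>u\<in>V. \<forall>v\<in>V. \<exists>xs. walk V E u v xs)"

definition gdist :: "'a set \<Rightarrow> ('a \<Rightarrow> 'a \<Rightarrow> bool) \<Rightarrow> 'a \<Rightarrow> 'a \<Rightarrow> nat" where
  "gdist V E u v = (LEAST n. \<exists>xs. walk V E u v xs \<and> length xs = Suc n)"

definition interval :: "'a set \<Rightarrow> ('a \<Rightarrow> 'a \<Rightarrow> bool) \<Rightarrow> 'a \<Rightarrow> 'a \<Rightarrow> 'a set" where
  "interval V E u v = {w. \<exists>xs. walk V E u v xs \<and> length xs = Suc (gdist V E u v) \<and> w \<in> set xs}"

definition strongly_resolves :: "'a set \<Rightarrow> ('a \<Rightarrow> 'a \<Rightarrow> bool) \<Rightarrow> 'a \<Rightarrow> 'a \<Rightarrow> 'a \<Rightarrow> bool" where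
  "strongly_resolves V E w u v \<longleftrightarrow> v \<in> interval V E u w \<or> u \<in> interval V E v w"

definition strong_resolving_set :: "'a set \<Rightarrow> ('a \<Rightarrow> 'a \<Rightarrow> bool) \<Rightarrow> 'a set \<Rightarrow> bool" where
  "strong_resolving_set V E S \<longleftrightarrow> S \<subseteq> V \<and>
     (\<forall>u\<in>V. \<forall>v\<in>V. u \<noteq> v \<longrightarrow> (\<exists>w\<in>S. strongly_resolves V E w u v))"

definition strong_metric_dim :: "'a set \<Rightarrow> ('a \<Rightarrow> 'a \<Rightarrow> bool) \<Rightarrow> nat" where
  "strong_metric_dim V E = (LEAST k. \<exists>S. strong_resolving_set V E S \<and> card S = k)"

definition cart_edges :: "('a \<Rightarrow> 'a \<Rightarrow> bool) \<Rightarrow> ('b \<Rightarrow> 'b \<Rightarrow> bool) \<Rightarrow> ('a \<times> 'b) \<Rightarrow> ('a \<times> 'b) \<Rightarrow> bool" where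
  "cart_edges E1 E2 p q \<longleftrightarrow>
     (fst p = fst q \<and> E2 (snd p) (snd q)) \<or> (snd p = snd q \<and> E1 (fst p) (fst q))"

end

theory Submission
  imports Defs
begin

text \<open>Two vertices are mutually maximally distant (MMD) if neither has a neighbour farther
  from the other. A set strongly resolves a graph iff it meets every MMD pair, i.e.\ iff it is
  a vertex cover of the graph whose edges are the MMD pairs; hence \<open>dim\<^sub>s(G)\<close> is the
  vertex cover number \<open>\<beta>\<close> of that graph. Distances in \<open>G \<box> H\<close> add up, so
  \<open>(g,h)\<close> and \<open>(g',h')\<close> are MMD whenever \<open>g,g'\<close> and \<open>h,h'\<close> are. A strong resolving set of
  \<open>G \<box> H\<close> is therefore a vertex cover of the direct product of the two MMD graphs, and a
  double counting argument shows that such a cover has at least \<open>\<beta>\<^sub>1 \<beta>\<^sub>2\<close> elements.\<close>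

section \<open>Walks\<close>

lemma walk_singleton: "u \<in> V \<Longrightarrow> walk V E u u [u]"
  by (simp add: walk_def)

lemma walk_endpoints: "walk V E u v xs \<Longrightarrow> u \<in> V \<and> v \<in> V"
  unfolding walk_def by (metis hd_in_set last_in_set subsetD)

lemma walk_Cons:
  assumes "u \<in> V" "E u x" "walk V E x v xs"
  shows "walk V E u v (u # xs)"
proof -
  have ne: "xs \<noteq> []" and "xs ! 0 = x" using assms(3) by (auto simp: walk_def hd_conv_nth)
  moreover have "\<forall>i. Suc i < length xs \<longrightarrow> E (xs ! i) (xs ! Suc i)"
    using assms(3) by (simp add: walk_def)
  ultimately have "\<forall>i. Suc i < length (u#xs) \<longrightarrow> E ((u#xs) ! i) ((u#xs) ! Suc i)"
    using assms(2) by (auto simp: nth_Cons split: nat.splits)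
  then show ?thesis using assms(1,3) ne unfolding walk_def by auto
qed

lemma walk_ConsD:
  assumes "walk V E u v (x # y # ys)"
  shows "x = u \<and> E u y \<and> walk V E y v (y # ys)"
proof -
  have adj: "\<forall>i. Suc i < length (x#y#ys) \<longrightarrow> E ((x#y#ys) ! i) ((x#y#ys) ! Suc i)"
    using assms unfolding walk_def by blast
  have "\<forall>i. Suc i < length (y#ys) \<longrightarrow> E ((y#ys) ! i) ((y#ys) ! Suc i)"
  proof (intro allI impI)
    fix i assume "Suc i < length (y#ys)"
    then show "E ((y#ys) ! i) ((y#ys) ! Suc i)" using adj[rule_format, of "Suc i"] by simp
  qed
  moreover have "E x y" using adj[rule_format, of 0] by simp
  ultimately show ?thesis using assms unfolding walk_def by auto
qed

lemma walk_append:
  assumes "walk V E u v xs" "walk V E v w ys"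
  shows "walk V E u w (xs @ tl ys) \<and> length (xs @ tl ys) = length xs + length ys - 1"
  using assms
proof (induction xs arbitrary: u)
  case Nil then show ?case by (simp add: walk_def)
next
  case (Cons x xs)
  have x: "x = u" using Cons.prems by (simp add: walk_def)
  obtain ys' where ys: "ys = v # ys'" using Cons.prems(2) by (cases ys) (auto simp: walk_def)
  show ?case
  proof (cases xs)
    case Nil
    then have "u = v" using Cons.prems x unfolding walk_def by auto
    then show ?thesis using Nil Cons.prems(2) x ys by simp
  next
    case (Cons y zs)
    with walk_ConsD[of V E u v x y zs] Cons.prems(1)
    have xs: "walk V E y v xs" and uy: "E u y" by auto
    from Cons.IH[OF xs Cons.prems(2)]
    have "walk V E y w (xs @ tl ys)" "length (xs @ tl ys) = length xs + length ys - 1" by auto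
    moreover have "u \<in> V" using walk_endpoints[OF Cons.prems(1)] by blast
    ultimately show ?thesis using walk_Cons[of u V E y w] uy x ys by (simp add: Cons)
  qed
qed

lemma walk_take:
  assumes "walk V E u w xs" "i < length xs"
  shows "walk V E u (xs ! i) (take (Suc i) xs)"
proof -
  have "take (Suc i) xs \<noteq> []" "length (take (Suc i) xs) = Suc i" using assms(2) by auto
  then have "last (take (Suc i) xs) = xs ! i" by (simp add: last_conv_nth)
  moreover have "set (take (Suc i) xs) \<subseteq> V" "hd (take (Suc i) xs) = u"
    using assms set_take_subset unfolding walk_def by fastforce+
  ultimately show ?thesis using assms unfolding walk_def by auto
qed

lemma walk_drop:
  assumes "walk V E u w xs" "i < length xs"
  shows "walk V E (xs ! i) w (drop i xs)"
proof -
  have "\<forall>j. Suc j < length (drop i xs) \<longrightarrow> E (drop i xs ! j) (drop i xs ! Suc j)"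
  proof (intro allI impI)
    fix j assume "Suc j < length (drop i xs)"
    then have "Suc (i + j) < length xs" by simp
    then show "E (drop i xs ! j) (drop i xs ! Suc j)"
      using assms unfolding walk_def by auto
  qed
  moreover have "set (drop i xs) \<subseteq> V" using assms(1) set_drop_subset unfolding walk_def by fast
  ultimately show ?thesis using assms unfolding walk_def by (simp add: hd_drop_conv_nth)
qed

lemma walk_rev:
  assumes "walk V E u v xs" and E_sym: "\<And>x y. E x y \<Longrightarrow> E y x"
  shows "walk V E v u (rev xs)"
proof -
  have "\<forall>j. Suc j < length (rev xs) \<longrightarrow> E (rev xs ! j) (rev xs ! Suc j)"
  proof (intro allI impI)
    fix j assume j: "Suc j < length (rev xs)"
    let ?k = "length xs - Suc (Suc j)"
    have "E (xs ! ?k) (xs ! Suc ?k)" using assms(1) j unfolding walk_def by simp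
    moreover have "rev xs ! j = xs ! Suc ?k" "rev xs ! Suc j = xs ! ?k"
      using j by (simp_all add: rev_nth Suc_diff_Suc)
    ultimately show "E (rev xs ! j) (rev xs ! Suc j)" using E_sym by simp
  qed
  then show ?thesis using assms(1) unfolding walk_def by (simp add: hd_rev last_rev)
qed

lemma gdist_le_walk:
  assumes "walk V E u v xs"
  shows "gdist V E u v \<le> length xs - 1"
  unfolding gdist_def
proof (rule Least_le)
  show "\<exists>ys. walk V E u v ys \<and> length ys = Suc (length xs - 1)"
    using assms by (intro exI[of _ xs]) (auto simp: walk_def)
qed

lemma shortest_walk_exists:
  assumes "walk V E u v xs"
  shows "\<exists>ys. walk V E u v ys \<and> length ys = Suc (gdist V E u v)"
proof -
  have "\<exists>n ys. walk V E u v ys \<and> length ys = Suc n"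
    using assms by (intro exI[of _ "length xs - 1"] exI[of _ xs]) (auto simp: walk_def)
  then show ?thesis unfolding gdist_def by (rule LeastI_ex)
qed

section \<open>Distances in a finite connected graph\<close>

locale finite_connected_graph =
  fixes V :: "'a set" and E :: "'a \<Rightarrow> 'a \<Rightarrow> bool"
  assumes finite_vertices: "finite V"
    and adj_sym: "E x y \<Longrightarrow> E y x"
    and adj_closed: "x \<in> V \<Longrightarrow> E x y \<Longrightarrow> y \<in> V"
    and connected: "connected_graph V E"
begin

abbreviation d where "d \<equiv> gdist V E"

lemma shortest_walk:
  assumes "u \<in> V" "v \<in> V"
  obtains xs where "walk V E u v xs" "length xs = Suc (d u v)"
  using connected assms shortest_walk_exists unfolding connected_graph_def by metis

lemma dist_triangle:
  assumes "u \<in> V" "v \<in> V" "w \<in> V"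
  shows "d u w \<le> d u v + d v w"
proof -
  obtain xs where xs: "walk V E u v xs" "length xs = Suc (d u v)" using shortest_walk assms by blast
  obtain ys where ys: "walk V E v w ys" "length ys = Suc (d v w)" using shortest_walk assms by blast
  have "walk V E u w (xs @ tl ys)" "length (xs @ tl ys) = length xs + length ys - 1"
    using walk_append[OF xs(1) ys(1)] by auto
  then show ?thesis using gdist_le_walk[of V E u w "xs @ tl ys"] xs(2) ys(2) by simp
qed

lemma dist_commute:
  assumes "u \<in> V" "v \<in> V"
  shows "d u v = d v u"
proof -
  have "d v u \<le> d u v" if uv: "u \<in> V" "v \<in> V" for u v
  proof -
    obtain xs where xs: "walk V E u v xs" "length xs = Suc (d u v)" using shortest_walk[OF uv] .
    show ?thesis using gdist_le_walk[OF walk_rev[OF xs(1) adj_sym]] xs(2) by simp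
  qed
  then show ?thesis using assms by (simp add: le_antisym)
qed

lemma dist_self: "u \<in> V \<Longrightarrow> d u u = 0"
  using gdist_le_walk[OF walk_singleton] by fastforce

lemma dist_eq_0_iff:
  assumes "u \<in> V" "v \<in> V"
  shows "d u v = 0 \<longleftrightarrow> u = v"
proof
  assume "d u v = 0"
  then obtain xs where xs: "walk V E u v xs" "length xs = 1" using shortest_walk[OF assms] by auto
  then obtain x where "xs = [x]" by (cases xs) auto
  then show "u = v" using xs(1) by (auto simp: walk_def)
qed (use assms dist_self in simp)

lemma dist_adj_le:
  assumes "u \<in> V" "E u z" "w \<in> V"
  shows "d z w \<le> d u w + 1"
proof -
  have z: "z \<in> V" using adj_closed assms by blast
  have "walk V E z u [z, u]"
    using walk_Cons[OF z adj_sym[OF assms(2)] walk_singleton[OF assms(1), of E]] .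
  then have "d z u \<le> 1" using gdist_le_walk by fastforce
  then show ?thesis using dist_triangle[OF z assms(1,3)] by simp
qed

lemma dist_adj_le':
  assumes "u \<in> V" "E u z" "w \<in> V"
  shows "d u w \<le> d z w + 1"
  using dist_adj_le[OF adj_closed[OF assms(1,2)] adj_sym[OF assms(2)] assms(3)] .

lemma adj_toward:
  assumes "u \<in> V" "w \<in> V" "u \<noteq> w"
  obtains z where "E u z" "d z w + 1 = d u w"
proof -
  obtain xs where xs: "walk V E u w xs" "length xs = Suc (d u w)" using shortest_walk assms by blast
  obtain x y ys where xyz: "xs = x # y # ys"
    using xs assms(3) by (cases xs; cases "tl xs") (auto simp: walk_def)
  with walk_ConsD[of V E u w x y ys] xs(1) have "walk V E y w (y # ys)" and uy: "E u y" by auto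
  then have "d y w + 1 \<le> d u w" using gdist_le_walk xs(2) xyz by fastforce
  moreover have "d u w \<le> d y w + 1" using dist_adj_le' assms uy by blast
  ultimately show ?thesis using that uy by simp
qed

lemma interval_dist:
  assumes "z \<in> interval V E x y"
  shows "d x z + d z y \<le> d x y"
proof -
  obtain xs where xs: "walk V E x y xs" "length xs = Suc (d x y)" "z \<in> set xs"
    using assms unfolding interval_def by blast
  obtain i where i: "i < length xs" "xs ! i = z" using xs(3) by (metis in_set_conv_nth)
  have "d x z \<le> i" using gdist_le_walk[OF walk_take[OF xs(1) i(1)]] i by simp
  moreover have "d z y \<le> length xs - Suc i" using gdist_le_walk[OF walk_drop[OF xs(1) i(1)]] i by simp
  ultimately show ?thesis using i(1) xs(2) by simp
qed

lemma in_intervalI: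
  assumes "x \<in> V" "y \<in> V" "z \<in> V" "d x z + d z y = d x y"
  shows "z \<in> interval V E x y"
proof -
  obtain xs where xs: "walk V E x z xs" "length xs = Suc (d x z)" using shortest_walk assms by blast
  obtain ys where ys: "walk V E z y ys" "length ys = Suc (d z y)" using shortest_walk assms by blast
  have "z \<in> set (xs @ tl ys)" using xs(1) by (auto simp: walk_def)
  then show ?thesis
    using walk_append[OF xs(1) ys(1)] xs(2) ys(2) assms(4) unfolding interval_def by auto
qed

end

section \<open>Strong resolving sets as vertex covers\<close>

definition mutually_max_distant :: "'a set \<Rightarrow> ('a \<Rightarrow> 'a \<Rightarrow> bool) \<Rightarrow> 'a \<Rightarrow> 'a \<Rightarrow> bool" where
  "mutually_max_distant V E u v \<longleftrightarrow> u \<in> V \<and> v \<in> V \<and> u \<noteq> v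
     \<and> (\<forall>z. E u z \<longrightarrow> gdist V E z v \<le> gdist V E u v)
     \<and> (\<forall>z. E v z \<longrightarrow> gdist V E u z \<le> gdist V E u v)"

definition vertex_cover :: "'a set \<Rightarrow> ('a \<Rightarrow> 'a \<Rightarrow> bool) \<Rightarrow> 'a set \<Rightarrow> bool" where
  "vertex_cover V R X \<longleftrightarrow> X \<subseteq> V \<and> (\<forall>u v. R u v \<longrightarrow> u \<in> X \<or> v \<in> X)"

definition cover_number :: "'a set \<Rightarrow> ('a \<Rightarrow> 'a \<Rightarrow> bool) \<Rightarrow> nat" where
  "cover_number V R = (LEAST k. \<exists>X. vertex_cover V R X \<and> card X = k)"

lemma cover_number_le: "vertex_cover V R X \<Longrightarrow> cover_number V R \<le> card X"
  unfolding cover_number_def by (rule Least_le) blast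

lemma minimum_vertex_cover:
  assumes "vertex_cover V R X"
  obtains Y where "vertex_cover V R Y" "card Y = cover_number V R"
proof -
  have "\<exists>k Y. vertex_cover V R Y \<and> card Y = k" using assms by blast
  then have "\<exists>Y. vertex_cover V R Y \<and> card Y = cover_number V R"
    unfolding cover_number_def by (rule LeastI_ex)
  then show ?thesis using that by blast
qed

lemma ex_arg_max_if_finite:
  fixes f :: "'a \<Rightarrow> nat"
  assumes "finite A" "a \<in> A"
  obtains x where "x \<in> A" "\<And>y. y \<in> A \<Longrightarrow> f y \<le> f x"
proof -
  have fin: "finite (f ` A)" "f ` A \<noteq> {}" using assms by auto
  obtain x where "x \<in> A" "f x = Max (f ` A)" using Max_in[OF fin] by auto
  then show ?thesis using that Max_ge[OF fin(1)] by auto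
qed

context finite_connected_graph
begin

lemma mutually_max_distant_commute:
  assumes "mutually_max_distant V E u v"
  shows "mutually_max_distant V E v u"
proof -
  have "u \<in> V" "v \<in> V" using assms by (simp_all add: mutually_max_distant_def)
  then show ?thesis using assms adj_closed dist_commute unfolding mutually_max_distant_def
    by (metis (no_types, lifting))
qed

lemma strong_resolving_set_covers:
  assumes S: "strong_resolving_set V E S"
  shows "vertex_cover V (mutually_max_distant V E) S"
  unfolding vertex_cover_def
proof (intro conjI allI impI)
  show "S \<subseteq> V" using S by (simp add: strong_resolving_set_def)
  have hit: "u \<in> S \<or> v \<in> S" if w: "w \<in> S" "v \<in> interval V E u w"
    and uv: "mutually_max_distant V E u v" for u v w
  proof (rule ccontr)
    assume "\<not> (u \<in> S \<or> v \<in> S)"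
    then have "v \<noteq> w" using w by blast
    have V: "u \<in> V" "v \<in> V" "w \<in> V" using uv w S by (auto simp: mutually_max_distant_def strong_resolving_set_def)
    then obtain z where z: "E v z" "d z w + 1 = d v w" using adj_toward \<open>v \<noteq> w\<close> by blast
    have "d u v + d v w \<le> d u w" using interval_dist[OF w(2)] .
    also have "\<dots> \<le> d u z + d z w" using dist_triangle V adj_closed z(1) by blast
    finally have "d u v < d u z" using z(2) by linarith
    then show False using uv z(1) by (auto simp: mutually_max_distant_def)
  qed
  fix u v assume uv: "mutually_max_distant V E u v"
  then have "u \<in> V" "v \<in> V" "u \<noteq> v" by (auto simp: mutually_max_distant_def)
  then obtain w where "w \<in> S" "v \<in> interval V E u w \<or> u \<in> interval V E v w"
    using S unfolding strong_resolving_set_def strongly_resolves_def by blast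
  then show "u \<in> S \<or> v \<in> S" using hit uv mutually_max_distant_commute by blast
qed

text \<open>Among the vertices \<open>w\<close> with \<open>v \<in> I[u,w]\<close> take one farthest from \<open>u\<close>: a neighbour
  of \<open>w\<close> farther from \<open>u\<close> would again have \<open>v\<close> on a geodesic from \<open>u\<close>.\<close>

lemma locally_farthest_extension:
  assumes u: "u \<in> V" and v: "v \<in> V"
  obtains w where "w \<in> V" "d u w = d u v + d v w" "\<And>z. E w z \<Longrightarrow> d u z \<le> d u w"
proof -
  define C where "C = {w \<in> V. d u w = d u v + d v w}"
  have "v \<in> C" "finite C" using v dist_self finite_vertices unfolding C_def by auto
  then obtain w where w: "w \<in> C" and w_max: "\<And>y. y \<in> C \<Longrightarrow> d u y \<le> d u w"
    using ex_arg_max_if_finite by metis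
  have wV: "w \<in> V" and w_eq: "d u w = d u v + d v w" using w by (auto simp: C_def)
  have "d u z \<le> d u w" if wz: "E w z" for z
  proof (rule ccontr)
    assume far: "\<not> d u z \<le> d u w"
    have z: "z \<in> V" using adj_closed wV wz by blast
    have "d u z \<le> d u w + 1" "d v z \<le> d v w + 1"
      using dist_adj_le[OF wV wz] u v z wV dist_commute by metis+
    moreover have "d u z \<le> d u v + d v z" using dist_triangle u v z by blast
    ultimately have "z \<in> C" using far w_eq z unfolding C_def by simp
    then show False using far w_max by blast
  qed
  then show ?thesis using that wV w_eq by blast
qed

text \<open>Extend \<open>u,v\<close> to a geodesic \<open>u' \<dots> u \<dots> v \<dots> v'\<close> whose ends are MMD; then \<open>v'\<close> resolves
  \<open>u,v\<close> through \<open>u\<close>, and \<open>u'\<close> resolves them through \<open>v\<close>.\<close>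

lemma cover_strong_resolving_set:
  assumes T: "vertex_cover V (mutually_max_distant V E) T"
  shows "strong_resolving_set V E T"
  unfolding strong_resolving_set_def
proof (intro conjI ballI impI)
  show "T \<subseteq> V" using T by (simp add: vertex_cover_def)
  fix u v assume u: "u \<in> V" and v: "v \<in> V" and "u \<noteq> v"
  obtain v' where v': "v' \<in> V" "d u v' = d u v + d v v'" and v'_far: "\<And>z. E v' z \<Longrightarrow> d u z \<le> d u v'"
    using locally_farthest_extension u v by blast
  obtain u' where u': "u' \<in> V" "d v' u' = d v' u + d u u'" and u'_far: "\<And>z. E u' z \<Longrightarrow> d v' z \<le> d v' u'"
    using locally_farthest_extension v' u by blast
  have "d u' v' = d v' u'" "d v' u = d u v'" "d u u' = d u' u" using u' v' u dist_commute by blast+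
  then have dist_u'v': "d u' v' = d u' u + d u v'" using u'(2) by simp
  have "d u v > 0" using dist_eq_0_iff u v \<open>u \<noteq> v\<close> by blast
  then have "u' \<noteq> v'" using dist_u'v' v'(2) u' dist_self by auto
  moreover have "d z v' \<le> d u' v'" if "E u' z" for z
    using u'_far[OF that] dist_commute u' v' adj_closed that by metis
  moreover have "d u' z \<le> d u' v'" if "E v' z" for z
    using dist_triangle[OF u'(1) u adj_closed[OF v'(1) that]] v'_far[OF that] dist_u'v' by linarith
  ultimately have "mutually_max_distant V E u' v'"
    using u' v' unfolding mutually_max_distant_def by blast
  then have "u' \<in> T \<or> v' \<in> T" using T by (simp add: vertex_cover_def)
  moreover have "v \<in> interval V E u v'" using in_intervalI u v' v v'(2) by simp
  moreover have "u \<in> interval V E v u'"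
  proof (rule in_intervalI[OF v u'(1) u])
    have "d v' u' \<le> d v' v + d v u'" "d v u' \<le> d v u + d u u'"
      using dist_triangle u v u' v' by blast+
    then show "d v u + d u u' = d v u'" using u'(2) v'(2) dist_commute u v v' by simp
  qed
  ultimately show "\<exists>w\<in>T. strongly_resolves V E w u v" unfolding strongly_resolves_def by blast
qed

theorem strong_metric_dim_eq_cover_number:
  "strong_metric_dim V E = cover_number V (mutually_max_distant V E)"
proof (rule antisym)
  have "vertex_cover V (mutually_max_distant V E) V"
    by (simp add: vertex_cover_def mutually_max_distant_def)
  then obtain X where X: "vertex_cover V (mutually_max_distant V E) X"
    "card X = cover_number V (mutually_max_distant V E)"
    using minimum_vertex_cover by blast
  have "strong_resolving_set V E X" using cover_strong_resolving_set[OF X(1)] .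
  then have "\<exists>k S. strong_resolving_set V E S \<and> card S = k" by blast
  then have "\<exists>S. strong_resolving_set V E S \<and> card S = strong_metric_dim V E"
    unfolding strong_metric_dim_def by (rule LeastI_ex)
  then show "cover_number V (mutually_max_distant V E) \<le> strong_metric_dim V E"
    using strong_resolving_set_covers cover_number_le by metis
  show "strong_metric_dim V E \<le> cover_number V (mutually_max_distant V E)"
    unfolding strong_metric_dim_def X(2)[symmetric]
    using \<open>strong_resolving_set V E X\<close> by (blast intro: Least_le)
qed

end

section \<open>Distances in the Cartesian product\<close>

lemma walk_lift_fst:
  assumes "walk V1 E1 g g' xs" "h \<in> V2"
  shows "walk (V1 \<times> V2) (cart_edges E1 E2) (g,h) (g',h) (map (\<lambda>x. (x,h)) xs)"
  using assms unfolding walk_def cart_edges_def by (auto simp: hd_map last_map)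

lemma walk_lift_snd:
  assumes "walk V2 E2 h h' ys" "g \<in> V1"
  shows "walk (V1 \<times> V2) (cart_edges E1 E2) (g,h) (g,h') (map (\<lambda>y. (g,y)) ys)"
  using assms unfolding walk_def cart_edges_def by (auto simp: hd_map last_map)

locale graph_pair = G: finite_connected_graph V1 E1 + H: finite_connected_graph V2 E2
  for V1 :: "'a set" and E1 and V2 :: "'b set" and E2
begin

abbreviation P where "P \<equiv> cart_edges E1 E2"
abbreviation dP where "dP \<equiv> gdist (V1 \<times> V2) P"

lemma product_walk:
  assumes "g \<in> V1" "g' \<in> V1" "h \<in> V2" "h' \<in> V2"
  obtains zs where "walk (V1 \<times> V2) P (g,h) (g',h') zs" "length zs = Suc (G.d g g' + H.d h h')"
proof -
  obtain xs where xs: "walk V1 E1 g g' xs" "length xs = Suc (G.d g g')"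
    using G.shortest_walk assms by blast
  obtain ys where ys: "walk V2 E2 h h' ys" "length ys = Suc (H.d h h')"
    using H.shortest_walk assms by blast
  show ?thesis
    using walk_append[OF walk_lift_fst[OF xs(1) assms(3)] walk_lift_snd[OF ys(1) assms(2)]]
      xs(2) ys(2) that by auto
qed

sublocale PG: finite_connected_graph "V1 \<times> V2" P
proof
  show "finite (V1 \<times> V2)" using G.finite_vertices H.finite_vertices by simp
  show "P x y \<Longrightarrow> P y x" for x y using G.adj_sym H.adj_sym unfolding cart_edges_def by auto
  show "x \<in> V1 \<times> V2 \<Longrightarrow> P x y \<Longrightarrow> y \<in> V1 \<times> V2" for x y
    using G.adj_closed H.adj_closed unfolding cart_edges_def by (cases x; cases y) auto
  show "connected_graph (V1 \<times> V2) P"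
    unfolding connected_graph_def
  proof (intro conjI ballI)
    show "V1 \<times> V2 \<noteq> {}" using G.connected H.connected by (simp add: connected_graph_def)
    fix p q assume "p \<in> V1 \<times> V2" "q \<in> V1 \<times> V2"
    then show "\<exists>zs. walk (V1 \<times> V2) P p q zs" using product_walk by (metis mem_Times_iff prod.collapse)
  qed
qed

lemma product_walk_length_ge:
  assumes "walk (V1 \<times> V2) P p q zs"
  shows "G.d (fst p) (fst q) + H.d (snd p) (snd q) \<le> length zs - 1"
  using assms
proof (induction zs arbitrary: p)
  case Nil then show ?case by (simp add: walk_def)
next
  case (Cons z zs)
  have q: "q \<in> V1 \<times> V2" using walk_endpoints[OF Cons.prems] by blast
  show ?case
  proof (cases zs)
    case Nil
    then have "p = q" using Cons.prems by (auto simp: walk_def)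
    then show ?thesis using G.dist_self H.dist_self q by auto
  next
    case (Cons y ys)
    with walk_ConsD[of "V1 \<times> V2" P p q z y ys] Cons.prems
    have zs: "walk (V1 \<times> V2) P y q zs" and py: "P p y" by auto
    have p: "p \<in> V1 \<times> V2" using walk_endpoints[OF Cons.prems] by blast
    have "G.d (fst p) (fst q) + H.d (snd p) (snd q) \<le> G.d (fst y) (fst q) + H.d (snd y) (snd q) + 1"
      using py p q G.dist_adj_le'[of "fst p" "fst y" "fst q"] H.dist_adj_le'[of "snd p" "snd y" "snd q"]
      unfolding cart_edges_def by (auto simp: mem_Times_iff)
    then show ?thesis using Cons.IH[OF zs] Cons by simp
  qed
qed

lemma product_dist:
  assumes "g \<in> V1" "g' \<in> V1" "h \<in> V2" "h' \<in> V2"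
  shows "dP (g,h) (g',h') = G.d g g' + H.d h h'"
proof (rule antisym)
  obtain zs where "walk (V1 \<times> V2) P (g,h) (g',h') zs" "length zs = Suc (G.d g g' + H.d h h')"
    using product_walk assms by blast
  then show "dP (g,h) (g',h') \<le> G.d g g' + H.d h h'" using gdist_le_walk by fastforce
  obtain ws where "walk (V1 \<times> V2) P (g,h) (g',h') ws" "length ws = Suc (dP (g,h) (g',h'))"
    using PG.shortest_walk assms by blast
  then show "G.d g g' + H.d h h' \<le> dP (g,h) (g',h')" using product_walk_length_ge by fastforce
qed

lemma product_mutually_max_distant:
  assumes g: "mutually_max_distant V1 E1 g g'" and h: "mutually_max_distant V2 E2 h h'"
  shows "mutually_max_distant (V1 \<times> V2) P (g,h) (g',h')"
proof -
  have V: "g \<in> V1" "g' \<in> V1" "h \<in> V2" "h' \<in> V2" "g \<noteq> g'"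
    using g h by (auto simp: mutually_max_distant_def)
  have "dP z (g',h') \<le> dP (g,h) (g',h')" if "P (g,h) z" for z
    using that V g h product_dist G.adj_closed H.adj_closed
    unfolding cart_edges_def mutually_max_distant_def by (cases z) auto
  moreover have "dP (g,h) z \<le> dP (g,h) (g',h')" if "P (g',h') z" for z
    using that V g h product_dist G.adj_closed H.adj_closed
    unfolding cart_edges_def mutually_max_distant_def by (cases z) auto
  ultimately show ?thesis using V unfolding mutually_max_distant_def by auto
qed

end

section \<open>Vertex covers of a direct product\<close>

lemma sum_card_filter_swap:
  assumes "finite A" "finite B"
  shows "(\<Sum>b\<in>B. card {a \<in> A. Q a b}) = (\<Sum>a\<in>A. card {b \<in> B. Q a b})"
proof -
  have "(\<Sum>b\<in>B. card {a \<in> A. Q a b}) = (\<Sum>b\<in>B. \<Sum>a\<in>A. if Q a b then 1 else 0)"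
    using assms by (simp add: sum.inter_filter[symmetric])
  also have "\<dots> = (\<Sum>a\<in>A. \<Sum>b\<in>B. if Q a b then 1 else 0)" by (rule sum.swap)
  also have "\<dots> = (\<Sum>a\<in>A. card {b \<in> B. Q a b})" using assms by (simp add: sum.inter_filter[symmetric])
  finally show ?thesis .
qed

text \<open>Assumption \<open>covers\<close> says that \<open>C\<close> is a vertex cover of the direct product of
  \<open>R\<^sub>1\<close> and \<open>R\<^sub>2\<close>.\<close>

locale direct_product_cover =
  fixes V1 :: "'a set" and R1 :: "'a \<Rightarrow> 'a \<Rightarrow> bool"
    and V2 :: "'b set" and R2 :: "'b \<Rightarrow> 'b \<Rightarrow> bool" and C :: "('a \<times> 'b) set"
  assumes finite1: "finite V1" and finite2: "finite V2"
    and R1_in: "R1 a a' \<Longrightarrow> a \<in> V1 \<and> a' \<in> V1" and R1_sym: "R1 a a' \<Longrightarrow> R1 a' a"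
    and R2_in: "R2 b b' \<Longrightarrow> b \<in> V2 \<and> b' \<in> V2"
    and C_sub: "C \<subseteq> V1 \<times> V2"
    and covers: "R1 a a' \<Longrightarrow> R2 b b' \<Longrightarrow> (a,b) \<in> C \<or> (a',b') \<in> C"
begin

definition column :: "'b \<Rightarrow> 'a set" where
  "column b = {a \<in> V1. (a,b) \<in> C}"

definition exposed :: "'a \<Rightarrow> 'b set" where
  "exposed a = {b \<in> V2. (a,b) \<notin> C \<and> (\<exists>a'. R1 a a' \<and> (a',b) \<notin> C)}"

lemma column_exposed_cover:
  assumes D: "vertex_cover V1 R1 D" and b: "b \<in> V2"
  shows "vertex_cover V1 R1 (column b \<union> {a \<in> D. b \<in> exposed a})"
  unfolding vertex_cover_def
proof (intro conjI allI impI)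
  show "column b \<union> {a \<in> D. b \<in> exposed a} \<subseteq> V1" using D by (auto simp: column_def vertex_cover_def)
  fix a a' assume aa': "R1 a a'"
  show "a \<in> column b \<union> {a \<in> D. b \<in> exposed a} \<or> a' \<in> column b \<union> {a \<in> D. b \<in> exposed a}"
  proof (cases "(a,b) \<in> C \<or> (a',b) \<in> C")
    case True
    then show ?thesis using R1_in[OF aa'] by (auto simp: column_def)
  next
    case False
    then have "b \<in> exposed a" "b \<in> exposed a'" using aa' R1_sym b by (auto simp: exposed_def)
    moreover have "a \<in> D \<or> a' \<in> D" using D aa' by (simp add: vertex_cover_def)
    ultimately show ?thesis by blast
  qed
qed

lemma exposed_complement_cover: "vertex_cover V2 R2 (V2 - exposed a)"
  unfolding vertex_cover_def
proof (intro conjI allI impI)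
  show "V2 - exposed a \<subseteq> V2" by blast
  fix b b' assume bb': "R2 b b'"
  show "b \<in> V2 - exposed a \<or> b' \<in> V2 - exposed a"
  proof (rule ccontr)
    assume "\<not> ?thesis"
    then have "b \<in> exposed a" "b' \<in> exposed a" using R2_in[OF bb'] by auto
    then obtain a' where "R1 a a'" "(a',b) \<notin> C" "(a,b') \<notin> C" by (auto simp: exposed_def)
    then show False using covers[OF R1_sym bb'] by blast
  qed
qed

lemma card_exposed_le: "card (exposed a) + cover_number V2 R2 \<le> card V2"
proof -
  have "exposed a \<subseteq> V2" by (auto simp: exposed_def)
  then have "card (V2 - exposed a) = card V2 - card (exposed a)" "card (exposed a) \<le> card V2"
    using finite2 by (simp_all add: card_Diff_subset card_mono finite_subset)
  moreover have "cover_number V2 R2 \<le> card (V2 - exposed a)"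
    using cover_number_le exposed_complement_cover by blast
  ultimately show ?thesis by linarith
qed

lemma card_eq_sum_column: "card C = (\<Sum>b\<in>V2. card (column b))"
proof -
  have "C = (\<lambda>(b,a). (a,b)) ` (SIGMA b:V2. column b)" using C_sub by (auto simp: column_def)
  also have "card \<dots> = card (SIGMA b:V2. column b)" by (rule card_image) (auto simp: inj_on_def)
  also have "\<dots> = (\<Sum>b\<in>V2. card (column b))" using finite1 finite2 by (simp add: column_def)
  finally show ?thesis .
qed

text \<open>Fix a minimum cover \<open>D\<close> of \<open>R\<^sub>1\<close> and double count the pairs \<open>(a,b)\<close> with
  \<open>a \<in> D\<close> and \<open>b \<in> exposed a\<close>.\<close>

theorem cover_number_mult_le_card: "cover_number V1 R1 * cover_number V2 R2 \<le> card C"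
proof -
  have "vertex_cover V1 R1 V1" using R1_in by (simp add: vertex_cover_def)
  then obtain D where D: "vertex_cover V1 R1 D" "card D = cover_number V1 R1"
    using minimum_vertex_cover by blast
  have finD: "finite D" using D finite1 by (meson finite_subset vertex_cover_def)
  have "cover_number V1 R1 * card V2 = (\<Sum>b\<in>V2. cover_number V1 R1)" by simp
  also have "\<dots> \<le> (\<Sum>b\<in>V2. card (column b) + card {a \<in> D. b \<in> exposed a})"
  proof (rule sum_mono)
    fix b assume "b \<in> V2"
    then show "cover_number V1 R1 \<le> card (column b) + card {a \<in> D. b \<in> exposed a}"
      using cover_number_le[OF column_exposed_cover[OF D(1)]] card_Un_le le_trans by blast
  qed
  also have "\<dots> = card C + (\<Sum>a\<in>D. card (exposed a))"
    using card_eq_sum_column sum_card_filter_swap[OF finD finite2, of "\<lambda>a b. b \<in> exposed a"]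
    by (simp add: sum.distrib exposed_def)
  also have "\<dots> \<le> card C + (\<Sum>a\<in>D. card V2 - cover_number V2 R2)"
  proof (intro add_left_mono sum_mono)
    show "card (exposed a) \<le> card V2 - cover_number V2 R2" for a
      using card_exposed_le[of a] by linarith
  qed
  also have "\<dots> = card C + cover_number V1 R1 * (card V2 - cover_number V2 R2)" using D(2) by simp
  finally have "cover_number V1 R1 * card V2 \<le> card C + cover_number V1 R1 * (card V2 - cover_number V2 R2)" .
  moreover have "cover_number V2 R2 \<le> card V2"
    using cover_number_le[of V2 R2 V2] R2_in by (simp add: vertex_cover_def)
  then have "cover_number V1 R1 * cover_number V2 R2 \<le> cover_number V1 R1 * card V2"
    by (rule mult_le_mono2)
  ultimately show ?thesis unfolding diff_mult_distrib2 by linarith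
qed

end

lemma finite_connected_graphI:
  "simple_graph V E \<Longrightarrow> connected_graph V E \<Longrightarrow> finite_connected_graph V E"
  unfolding simple_graph_def by unfold_locales auto

theorem theorem26:
  fixes V1 :: "'a set" and E1 :: "'a \<Rightarrow> 'a \<Rightarrow> bool"
    and V2 :: "'b set" and E2 :: "'b \<Rightarrow> 'b \<Rightarrow> bool"
  assumes "simple_graph V1 E1" and "connected_graph V1 E1"
    and "simple_graph V2 E2" and "connected_graph V2 E2"
  shows "strong_metric_dim (V1 \<times> V2) (cart_edges E1 E2)
           \<ge> strong_metric_dim V1 E1 * strong_metric_dim V2 E2"
proof -
  interpret graph_pair V1 E1 V2 E2
    by (intro graph_pair.intro finite_connected_graphI assms)
  have "vertex_cover (V1 \<times> V2) (mutually_max_distant (V1 \<times> V2) P) (V1 \<times> V2)"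
    by (simp add: vertex_cover_def mutually_max_distant_def)
  then obtain X where X: "vertex_cover (V1 \<times> V2) (mutually_max_distant (V1 \<times> V2) P) X"
    "card X = strong_metric_dim (V1 \<times> V2) P"
    unfolding PG.strong_metric_dim_eq_cover_number by (rule minimum_vertex_cover)
  interpret direct_product_cover V1 "mutually_max_distant V1 E1" V2 "mutually_max_distant V2 E2" X
  proof
    show "mutually_max_distant V1 E1 a a' \<Longrightarrow> a \<in> V1 \<and> a' \<in> V1"
      and "mutually_max_distant V2 E2 b b' \<Longrightarrow> b \<in> V2 \<and> b' \<in> V2" for a a' b b'
      by (simp_all add: mutually_max_distant_def)
    show "(a,b) \<in> X \<or> (a',b') \<in> X"
      if "mutually_max_distant V1 E1 a a'" "mutually_max_distant V2 E2 b b'" for a a' b b'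
      using X(1) product_mutually_max_distant[OF that] by (simp add: vertex_cover_def)
  qed (use X(1) G.finite_vertices H.finite_vertices G.mutually_max_distant_commute in
      \<open>simp_all add: vertex_cover_def\<close>)
  show ?thesis
    using cover_number_mult_le_card X(2)
    unfolding G.strong_metric_dim_eq_cover_number H.strong_metric_dim_eq_cover_number by simp
qed

end
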